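(* Let $X,Y$ be complex Banach spaces, $\emptyset\ne I\subseteq\mathbb R^n$, let $\mathcal B$ be a non-empty collection of non-empty subsets of $X$ such that every $x\in X$ belongs to some $B\in\mathcal B$, and let $\mathrm R$ be a non-empty collection of sequences in $\mathbb R^n$ such that $\mathbf t+\mathbf b(l)\in I$ whenever $\mathbf t\in I$, $\mathbf b\in\mathrm R$, $l\in\mathbb N$, and such that every subsequence of a sequence in $\mathrm R$ belongs to $\mathrm R$. Suppose that for each $j\in\mathbb N$ the function $F_j:I\times X\to Y$ is $(\mathrm R,\mathcal B)$-multi-almost periodic. If for each $B\in\mathcal B$ there exists $\epsilon_B>0$ such that $(F_j)$ converges uniformly to a function $F:I\times X\to Y$ on $I\times\bigl(B^{\circ}\cup\bigcup_{x\in\partial B}B(x,\epsilon_B)\bigr)$, then $F$ is $(\mathrm R,\mathcal B)$-multi-almost periodic.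
   Context: A continuous function $F:I\times X\to Y$ is called $(\mathrm R,\mathcal B)$-multi-almost periodic if for every $B\in\mathcal B$ and every sequence $(\mathbf b_k)\in\mathrm R$ there exist a subsequence $(\mathbf b_{k_l})$ and a function $F^\ast:I\times X\to Y$ such that $\lim_{l\to\infty}F(\mathbf t+\mathbf b_{k_l};x)=F^\ast(\mathbf t;x)$ uniformly for $x\in B$, $\mathbf t\in I$. $B^\circ$ and $\partial B$ denote the interior and boundary of $B$ in $X$, and $B(x,\epsilon)$ is the closed ball of radius $\epsilon$ centred at $x$. *)

theory Defs
  imports "HOL-Analysis.Analysis"
begin

definition multi_almost_periodic ::
  "(real^'n) set \<Rightarrow> (nat \<Rightarrow> real^'n) set \<Rightarrow> 'x::real_normed_vector set set
   \<Rightarrow> (real^'n \<Rightarrow> 'x \<Rightarrow> 'y::real_normed_vector) \<Rightarrow> bool" where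
  "multi_almost_periodic I R \<B> F \<longleftrightarrow>
     continuous_on (I \<times> UNIV) (\<lambda>(t, x). F t x) \<and>
     (\<forall>B\<in>\<B>. \<forall>b\<in>R. \<exists>r Fstar. strict_mono r \<and>
        uniform_limit (I \<times> B) (\<lambda>l (t, x). F (t + b (r l)) x) (\<lambda>(t, x). Fstar t x) sequentially)"

end

(* Since interior B \<union> (\<Union>x\<in>frontier B. cball x \<epsilon>) is a neighbourhood of every point of
   B, F is locally a uniform limit of the continuous Fs j, hence continuous. Given b \<in> R, a
   diagonal argument (R is closed under subsequences) gives one subsequence r along which the
   translates Fs j (t + b (r l)) x converge uniformly on I \<times> B for every j. These translates stay
   in the set where Fs j \<longrightarrow> F uniformly, so an e/3 argument makes the translates of F uniformly
   Cauchy on I \<times> B, and Y is complete. *)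

theory Submission
  imports Defs "HOL-Library.Diagonal_Subsequence"
begin

lemma continuous_on_locally:
  assumes "\<And>p. p \<in> S \<Longrightarrow> \<exists>U. open U \<and> p \<in> U \<and> continuous_on (S \<inter> U) f"
  shows "continuous_on S f"
  unfolding continuous_on_def
proof
  fix p assume "p \<in> S"
  then obtain U where U: "open U" "p \<in> U" "continuous_on (S \<inter> U) f"
    using assms by blast
  then have "(f \<longlongrightarrow> f p) (at p within S \<inter> U)"
    using \<open>p \<in> S\<close> by (simp add: continuous_on_def)
  moreover have "at p within S \<inter> U = at p within S"
    by (rule at_within_nhd[of p U]) (use U in auto)
  ultimately show "(f \<longlongrightarrow> f p) (at p within S)" by simp
qed

lemma closure_subset_interior_Un_frontier_cballs:
  assumes "0 < e"
  shows "closure B \<subseteq> interior (interior B \<union> (\<Union>x\<in>frontier B. cball x e))"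
proof
  fix x assume x: "x \<in> closure B"
  show "x \<in> interior (interior B \<union> (\<Union>x\<in>frontier B. cball x e))"
  proof (cases "x \<in> interior B")
    case True
    then show ?thesis by (meson Un_upper1 interior_maximal open_interior subsetD)
  next
    case False
    with x have "ball x e \<subseteq> interior B \<union> (\<Union>x\<in>frontier B. cball x e)"
      by (auto simp: frontier_def)
    then show ?thesis by (meson assms centre_in_ball interior_maximal open_ball subsetD)
  qed
qed

lemma uniformly_convergent_on_subseq:
  assumes "uniformly_convergent_on X f" "strict_mono r"
  shows "uniformly_convergent_on X (\<lambda>l. f (r l))"
  using assms filterlim_compose[OF _ filterlim_subseq]
  unfolding uniformly_convergent_on_def by blast

lemma uniformly_convergent_on_offset_iff:
  "uniformly_convergent_on X (\<lambda>l. f (k + l)) \<longleftrightarrow> uniformly_convergent_on X f"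
proof -
  have "filterlim (\<lambda>l. f (l + k)) G sequentially \<longleftrightarrow> filterlim f G sequentially" for G
    unfolding filterlim_iff using eventually_sequentially_seg[where P="\<lambda>n. _ (f n)"] by meson
  then show ?thesis unfolding uniformly_convergent_on_def add.commute[of k] by simp
qed

lemma diagonal_uniformly_convergent_subseq:
  fixes f :: "nat \<Rightarrow> nat \<Rightarrow> 'a \<Rightarrow> 'b::metric_space"
  assumes "\<And>j (s :: nat \<Rightarrow> nat). strict_mono s \<Longrightarrow>
      \<exists>r. strict_mono r \<and> uniformly_convergent_on X (\<lambda>l. f j (s (r l)))"
  shows "\<exists>r. strict_mono r \<and> (\<forall>j. uniformly_convergent_on X (\<lambda>l. f j (r l)))"
proof -
  define P where "P j s \<longleftrightarrow> uniformly_convergent_on X (\<lambda>l. f j (s l))" for j s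
  interpret subseqs P
  proof
    fix j and s :: "nat \<Rightarrow> nat" assume "strict_mono s"
    from assms[OF this] show "\<exists>r. strict_mono r \<and> P j (s \<circ> r)"
      by (simp add: P_def o_def)
  qed
  have "P j (diagseq \<circ> (+) (Suc j))" for j
  proof (rule diagseq_holds)
    fix r s n assume "strict_mono (r :: nat \<Rightarrow> nat)" "P n s"
    then show "P n (s \<circ> r)"
      using uniformly_convergent_on_subseq[of X "\<lambda>l. f n (s l)" r] by (simp add: P_def o_def)
  qed
  then have "uniformly_convergent_on X (\<lambda>l. f j (diagseq (Suc j + l)))" for j
    by (simp only: P_def o_def)
  then have "uniformly_convergent_on X (\<lambda>l. f j (diagseq l))" for j
    by (subst (asm) uniformly_convergent_on_offset_iff)
  then show ?thesis using subseq_diagseq by blast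
qed

lemma uniformly_convergent_on_compose_uniform_limit:
  fixes f :: "'i \<Rightarrow> 'a \<Rightarrow> 'b::complete_space"
  assumes lim: "uniform_limit Y f g F" and "F \<noteq> bot"
    and conv: "\<And>j. uniformly_convergent_on X (\<lambda>l x. f j (h l x))"
    and maps: "\<And>l x. x \<in> X \<Longrightarrow> h l x \<in> Y"
  shows "uniformly_convergent_on X (\<lambda>l x. g (h l x))"
proof (rule Cauchy_uniformly_convergent, rule uniformly_Cauchy_onI)
  fix e :: real assume "e > 0"
  then have "e / 3 > 0" by simp
  then have "\<forall>\<^sub>F j in F. \<forall>y\<in>Y. dist (f j y) (g y) < e / 3"
    by (rule uniform_limitD[OF lim])
  then obtain j where j: "\<forall>y\<in>Y. dist (f j y) (g y) < e / 3"
    using eventually_happens'[OF \<open>F \<noteq> bot\<close>] by blast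
  have "uniformly_Cauchy_on X (\<lambda>l x. f j (h l x))"
    by (rule uniformly_convergent_Cauchy[OF conv])
  with \<open>e / 3 > 0\<close> obtain M where M: "\<forall>x\<in>X. \<forall>m\<ge>M. \<forall>n\<ge>M. dist (f j (h m x)) (f j (h n x)) < e / 3"
    unfolding uniformly_Cauchy_on_def by blast
  have "dist (g (h m x)) (g (h n x)) < e" if "x \<in> X" "m \<ge> M" "n \<ge> M" for x m n
  proof -
    have "dist (g (h m x)) (g (h n x))
        \<le> dist (g (h m x)) (f j (h m x)) + dist (f j (h m x)) (f j (h n x))
          + dist (f j (h n x)) (g (h n x))"
      using dist_triangle[of "g (h m x)" "g (h n x)" "f j (h m x)"]
        dist_triangle[of "f j (h m x)" "g (h n x)" "f j (h n x)"] by linarith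
    moreover have "dist (g (h m x)) (f j (h m x)) < e / 3" "dist (f j (h n x)) (g (h n x)) < e / 3"
      using j maps \<open>x \<in> X\<close> by (auto simp: dist_commute)
    moreover have "dist (f j (h m x)) (f j (h n x)) < e / 3"
      using M that by blast
    ultimately show ?thesis by linarith
  qed
  then show "\<exists>M. \<forall>x\<in>X. \<forall>m\<ge>M. \<forall>n\<ge>M. dist (g (h m x)) (g (h n x)) < e" by blast
qed

lemma multi_almost_periodic_iff_uniformly_convergent_on:
  fixes F :: "real^'n \<Rightarrow> 'x::real_normed_vector \<Rightarrow> 'y::real_normed_vector"
  shows "multi_almost_periodic I R \<B> F \<longleftrightarrow>
     continuous_on (I \<times> UNIV) (\<lambda>(t, x). F t x) \<and>
     (\<forall>B\<in>\<B>. \<forall>b\<in>R. \<exists>r. strict_mono r \<and>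
        uniformly_convergent_on (I \<times> B) (\<lambda>l (t, x). F (t + b (r l)) x))"
proof -
  have curry_limit: "(\<exists>Fstar. uniform_limit X f (\<lambda>(t, x). Fstar t x) sequentially) \<longleftrightarrow>
      uniformly_convergent_on X f" for X :: "((real^'n) \<times> 'x) set" and f :: "nat \<Rightarrow> (real^'n) \<times> 'x \<Rightarrow> 'y"
  proof
    assume "uniformly_convergent_on X f"
    then obtain l where "uniform_limit X f l sequentially"
      unfolding uniformly_convergent_on_def by blast
    then show "\<exists>Fstar. uniform_limit X f (\<lambda>(t, x). Fstar t x) sequentially"
      by (intro exI[of _ "curry l"]) simp
  qed (auto simp: uniformly_convergent_on_def)
  show ?thesis unfolding multi_almost_periodic_def by (simp add: curry_limit)
qed

lemma continuous_on_uniform_limit_near_frontiers: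
  fixes Fs :: "nat \<Rightarrow> 'a::topological_space \<Rightarrow> 'x::metric_space \<Rightarrow> 'y::metric_space"
  assumes cont: "\<And>j. continuous_on (I \<times> UNIV) (\<lambda>(t, x). Fs j t x)"
    and cover: "\<forall>x. \<exists>B\<in>\<B>. x \<in> B"
    and lim: "\<forall>B\<in>\<B>. \<exists>\<epsilon>>0. uniform_limit
            (I \<times> (interior B \<union> (\<Union>x\<in>frontier B. cball x \<epsilon>)))
            (\<lambda>j (t, x). Fs j t x) (\<lambda>(t, x). F t x) sequentially"
  shows "continuous_on (I \<times> UNIV) (\<lambda>(t, x). F t x)"
proof (rule continuous_on_locally)
  fix p assume "p \<in> I \<times> (UNIV :: 'x set)"
  obtain B where "B \<in> \<B>" "snd p \<in> B" using cover by blast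
  then obtain \<epsilon> where "\<epsilon> > 0" and lim_B: "uniform_limit
            (I \<times> (interior B \<union> (\<Union>x\<in>frontier B. cball x \<epsilon>)))
            (\<lambda>j (t, x). Fs j t x) (\<lambda>(t, x). F t x) sequentially"
    using lim by blast
  define U where "U = interior (interior B \<union> (\<Union>x\<in>frontier B. cball x \<epsilon>))"
  have "snd p \<in> U"
    using \<open>snd p \<in> B\<close> closure_subset closure_subset_interior_Un_frontier_cballs[OF \<open>\<epsilon> > 0\<close>]
    unfolding U_def by blast
  have "continuous_on (I \<times> U) (\<lambda>(t, x). F t x)"
  proof (rule uniform_limit_theorem)
    show "\<forall>\<^sub>F j in sequentially. continuous_on (I \<times> U) (\<lambda>(t, x). Fs j t x)"
      by (intro always_eventually allI continuous_on_subset[OF cont]) auto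
    show "uniform_limit (I \<times> U) (\<lambda>j (t, x). Fs j t x) (\<lambda>(t, x). F t x) sequentially"
      by (rule uniform_limit_on_subset[OF lim_B]) (auto simp: U_def dest: interior_subset[THEN subsetD])
  qed simp
  moreover have "I \<times> UNIV \<inter> UNIV \<times> U = I \<times> U" by auto
  ultimately show "\<exists>V. open V \<and> p \<in> V \<and> continuous_on (I \<times> UNIV \<inter> V) (\<lambda>(t, x). F t x)"
    using \<open>snd p \<in> U\<close> by (intro exI[of _ "UNIV \<times> U"]) (auto simp: U_def open_Times mem_Times_iff)
qed

lemma uniformly_convergent_translates_near_frontiers:
  fixes Fs :: "nat \<Rightarrow> 'a::plus \<Rightarrow> 'x::metric_space \<Rightarrow> 'y::complete_space"
  assumes conv: "\<And>j (s :: nat \<Rightarrow> nat). strict_mono s \<Longrightarrow> \<exists>r. strict_mono r \<and>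
        uniformly_convergent_on (I \<times> B) (\<lambda>l (t, x). Fs j (t + b (s (r l))) x)"
    and translate: "\<forall>t\<in>I. \<forall>l. t + b l \<in> I"
    and "\<epsilon> > 0"
    and lim: "uniform_limit
            (I \<times> (interior B \<union> (\<Union>x\<in>frontier B. cball x \<epsilon>)))
            (\<lambda>j (t, x). Fs j t x) (\<lambda>(t, x). F t x) sequentially"
  shows "\<exists>r. strict_mono r \<and> uniformly_convergent_on (I \<times> B) (\<lambda>l (t, x). F (t + b (r l)) x)"
proof -
  obtain r where r: "strict_mono r"
    "\<And>j. uniformly_convergent_on (I \<times> B) (\<lambda>l (t, x). Fs j (t + b (r l)) x)"
    using diagonal_uniformly_convergent_subseq[where f="\<lambda>j l (t, x). Fs j (t + b l) x" and X="I \<times> B"] conv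
    by (auto simp: case_prod_unfold)
  define h :: "nat \<Rightarrow> 'a \<times> 'x \<Rightarrow> 'a \<times> 'x" where "h l = (\<lambda>(t, x). (t + b (r l), x))" for l
  have "B \<subseteq> interior B \<union> (\<Union>x\<in>frontier B. cball x \<epsilon>)"
    using closure_subset closure_subset_interior_Un_frontier_cballs[OF \<open>\<epsilon> > 0\<close>] interior_subset
    by blast
  then have "h l p \<in> I \<times> (interior B \<union> (\<Union>x\<in>frontier B. cball x \<epsilon>))" if "p \<in> I \<times> B" for l p
    using translate that by (auto simp: h_def)
  moreover have "uniformly_convergent_on (I \<times> B) (\<lambda>l p. (\<lambda>(t, x). Fs j t x) (h l p))" for j
    using r(2)[of j] by (simp add: h_def case_prod_unfold)
  ultimately have "uniformly_convergent_on (I \<times> B) (\<lambda>l p. (\<lambda>(t, x). F t x) (h l p))"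
    by (intro uniformly_convergent_on_compose_uniform_limit[OF lim]) auto
  then show ?thesis
    using r(1) by (auto simp: h_def case_prod_unfold)
qed

theorem proposition2p8:
  fixes I :: "(real^'n) set"
    and R :: "(nat \<Rightarrow> real^'n) set"
    and \<B> :: "'x::banach set set"
    and Fs :: "nat \<Rightarrow> real^'n \<Rightarrow> 'x \<Rightarrow> 'y::banach"
    and F :: "real^'n \<Rightarrow> 'x \<Rightarrow> 'y"
  assumes "I \<noteq> {}"
    and "\<B> \<noteq> {}"
    and "\<forall>B\<in>\<B>. B \<noteq> {}"
    and "\<forall>x. \<exists>B\<in>\<B>. x \<in> B"
    and "R \<noteq> {}"
    and "\<forall>t\<in>I. \<forall>b\<in>R. \<forall>l. t + b l \<in> I"
    and "\<forall>b\<in>R. \<forall>r. strict_mono r \<longrightarrow> b \<circ> r \<in> R"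
    and "\<forall>j. multi_almost_periodic I R \<B> (Fs j)"
    and "\<forall>B\<in>\<B>. \<exists>\<epsilon>>0. uniform_limit
            (I \<times> (interior B \<union> (\<Union>x\<in>frontier B. cball x \<epsilon>)))
            (\<lambda>j (t, x). Fs j t x) (\<lambda>(t, x). F t x) sequentially"
  shows "multi_almost_periodic I R \<B> F"
  unfolding multi_almost_periodic_iff_uniformly_convergent_on
proof (intro conjI ballI)
  note Fs_ap = assms(8)[unfolded multi_almost_periodic_iff_uniformly_convergent_on]
  show "continuous_on (I \<times> UNIV) (\<lambda>(t, x). F t x)"
    by (rule continuous_on_uniform_limit_near_frontiers[OF _ assms(4,9)]) (use Fs_ap in blast)
  fix B b assume "B \<in> \<B>" "b \<in> R"
  have Fs_conv: "\<exists>r. strict_mono r \<and>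
      uniformly_convergent_on (I \<times> B) (\<lambda>l (t, x). Fs j (t + b (s (r l))) x)"
    if "strict_mono s" for j and s :: "nat \<Rightarrow> nat"
  proof -
    have "b \<circ> s \<in> R" using assms(7) \<open>b \<in> R\<close> that by blast
    then have "\<exists>r. strict_mono r \<and>
        uniformly_convergent_on (I \<times> B) (\<lambda>l (t, x). Fs j (t + (b \<circ> s) (r l)) x)"
      using Fs_ap \<open>B \<in> \<B>\<close> by blast
    then show ?thesis by (simp add: o_def)
  qed
  obtain \<epsilon> where "\<epsilon> > 0" and lim: "uniform_limit
            (I \<times> (interior B \<union> (\<Union>x\<in>frontier B. cball x \<epsilon>)))
            (\<lambda>j (t, x). Fs j t x) (\<lambda>(t, x). F t x) sequentially"
    using assms(9) \<open>B \<in> \<B>\<close> by blast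
  show "\<exists>r. strict_mono r \<and> uniformly_convergent_on (I \<times> B) (\<lambda>l (t, x). F (t + b (r l)) x)"
    by (rule uniformly_convergent_translates_near_frontiers[OF Fs_conv _ \<open>\<epsilon> > 0\<close> lim])
      (use assms(6) \<open>b \<in> R\<close> in auto)
qed

end
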